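(* Let $F$ be an infinite field (e.g. $\mathbb{R}$ or $\mathbb{C}$), let $V$ be a vector space over $F$, and let $n\ge 1$. If a widget with $n$ pairs in $V$ is valid, then it contains a subwidget which is legal but not full.
   Context: A widget with $n$ pairs in $V$ is an indexed family of $n$ pairs of vectors $p_i=(p_i^+,p_i^-)$, $i=1,\dots,n$, in $V$ (the vectors $p_i^+,p_i^-$ are called the points of the pair $p_i$). A section of a widget is a set of points containing at most one point from each pair. A widget with $n$ pairs is legal if every section spans a linear subspace of $V$ of dimension at most $n-1$. A widget with $n$ pairs is full if the linear span of all its $2n$ points has dimension at least $n$. A widget is valid if it is both legal and full. A subwidget of a widget with $n$ pairs is the widget formed by some $k$ of its pairs with $1\le k<n$; it is itself a widget with $k$ pairs, so it is legal if every one of its sections spans a subspace of dimension at most $k-1$, and full if its $2k$ points span a subspace of dimension at least $k$. *)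

theory Defs
  imports Complex_Main
begin

text \<open>A widget is an indexed family of pairs p i = (p_i^+, p_i^-), i ranging over a finite index
set I (a widget with n pairs has I = {0..<n}).\<close>

definition widget_section :: "nat set \<Rightarrow> (nat \<Rightarrow> 'v \<times> 'v) \<Rightarrow> 'v set \<Rightarrow> bool" where
  "widget_section I p S \<longleftrightarrow>
     (\<exists>J c. J \<subseteq> I \<and> (\<forall>i\<in>J. c i = fst (p i) \<or> c i = snd (p i)) \<and> S = c ` J)"

definition widget_legal ::
  "('f::field \<Rightarrow> 'v::ab_group_add \<Rightarrow> 'v) \<Rightarrow> nat set \<Rightarrow> (nat \<Rightarrow> 'v \<times> 'v) \<Rightarrow> bool" where
  "widget_legal scale I p \<longleftrightarrow>
     (\<forall>S. widget_section I p S \<longrightarrow> vector_space.dim scale S \<le> card I - 1)"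

definition widget_full ::
  "('f::field \<Rightarrow> 'v::ab_group_add \<Rightarrow> 'v) \<Rightarrow> nat set \<Rightarrow> (nat \<Rightarrow> 'v \<times> 'v) \<Rightarrow> bool" where
  "widget_full scale I p \<longleftrightarrow>
     card I \<le> vector_space.dim scale (\<Union>i\<in>I. {fst (p i), snd (p i)})"

definition widget_valid ::
  "('f::field \<Rightarrow> 'v::ab_group_add \<Rightarrow> 'v) \<Rightarrow> nat set \<Rightarrow> (nat \<Rightarrow> 'v \<times> 'v) \<Rightarrow> bool" where
  "widget_valid scale I p \<longleftrightarrow> widget_legal scale I p \<and> widget_full scale I p"

end

theory Submission
  imports Defs
begin

text \<open>Say that sets A_0, ..., A_{n-1} of vectors satisfy Rado's condition if any k of them
together span a space of dimension at least k. By Rado's theorem for linear matroids one can then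
pick c_i \<in> A_i such that the singletons {c_i} still satisfy it, i.e. the c_i are linearly
independent; the proof shrinks the sets one point at a time, submodularity of dimension showing
that of two points of the same set at least one can always be discarded.
Now let a widget be valid, and suppose every proper subwidget is illegal or full. A subwidget
that is not full is automatically legal, so every subwidget is full, which says exactly that the
pairs satisfy Rado's condition. One point from each pair then gives a section spanning an
n-dimensional space, contradicting legality.\<close>

definition rado_condition ::
  "('f::field \<Rightarrow> 'v::ab_group_add \<Rightarrow> 'v) \<Rightarrow> nat \<Rightarrow> (nat \<Rightarrow> 'v set) \<Rightarrow> bool" where
  "rado_condition scale n A \<longleftrightarrow>
     (\<forall>K. K \<subseteq> {0..<n} \<longrightarrow> card K \<le> vector_space.dim scale (\<Union>i\<in>K. A i))"

context vector_space
begin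

lemma dim_subset_finite:
  assumes "S \<subseteq> T" "finite T"
  shows "dim S \<le> dim T"
proof -
  obtain B where B: "B \<subseteq> T" "independent B" "T \<subseteq> span B" "card B = dim T"
    using basis_exists by blast
  with assms have "finite B" by (blast intro: finite_subset)
  with B assms show ?thesis using dim_le_card[of S B] by auto
qed

lemma dim_Un_Int_le:
  assumes "finite X" "finite Y"
  shows "dim (X \<union> Y) + dim (X \<inter> Y) \<le> dim X + dim Y"
proof -
  obtain B where B: "B \<subseteq> X \<inter> Y" "independent B" "X \<inter> Y \<subseteq> span B" "card B = dim (X \<inter> Y)"
    by (rule basis_exists)
  have "B \<subseteq> X" "B \<subseteq> Y" using B(1) by auto
  obtain C where C: "B \<subseteq> C" "C \<subseteq> X" "independent C" "X \<subseteq> span C"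
    using \<open>B \<subseteq> X\<close> B(2) by (rule maximal_independent_subset_extend)
  obtain D where D: "B \<subseteq> D" "D \<subseteq> Y" "independent D" "Y \<subseteq> span D"
    using \<open>B \<subseteq> Y\<close> B(2) by (rule maximal_independent_subset_extend)
  have finC: "finite C" using C(2) assms(1) by (rule finite_subset)
  have finD: "finite D" using D(2) assms(2) by (rule finite_subset)
  have "X \<union> Y \<subseteq> span (C \<union> D)"
    using C(4) D(4) span_mono[of C "C \<union> D"] span_mono[of D "C \<union> D"] by blast
  then have "dim (X \<union> Y) \<le> card (C \<union> D)" using finC finD by (simp add: dim_le_card)
  moreover have "card B \<le> card (C \<inter> D)" using B(1) C(1) D(1) finC by (intro card_mono) auto
  moreover have "card C + card D = card (C \<union> D) + card (C \<inter> D)" using finC finD by (rule card_Un_Int)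
  moreover have "card C = dim X" using C(2,4,3) by (rule basis_card_eq_dim)
  moreover have "card D = dim Y" using D(2,4,3) by (rule basis_card_eq_dim)
  ultimately show ?thesis using B(4) by linarith
qed

lemma rado_conditionD:
  "rado_condition scale n A \<Longrightarrow> K \<subseteq> {0..<n} \<Longrightarrow> card K \<le> dim (\<Union>i\<in>K. A i)"
  unfolding rado_condition_def by blast

lemma rado_condition_nonempty:
  assumes "rado_condition scale n A" "j < n"
  shows "A j \<noteq> {}"
proof
  assume "A j = {}"
  have "card {j} \<le> dim (\<Union>k\<in>{j}. A k)"
    using assms(2) by (intro rado_conditionD[OF assms(1)]) auto
  also have "\<dots> = 0"
    using \<open>A j = {}\<close> dim_eq_card_independent[OF independent_empty] by simp
  finally show False by simp
qed

lemma rado_condition_delete_violation: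
  assumes rado: "rado_condition scale n A" and fin: "\<And>j. j < n \<Longrightarrow> finite (A j)" and "i < n"
    and violated: "\<not> rado_condition scale n (A(i := A i - {x}))"
  obtains L where "L \<subseteq> {0..<n} - {i}" "dim ((\<Union>j\<in>L. A j) \<union> (A i - {x})) \<le> card L"
proof -
  obtain K where K: "K \<subseteq> {0..<n}" "dim (\<Union>j\<in>K. (A(i := A i - {x})) j) < card K"
    using violated unfolding rado_condition_def by (meson not_le)
  have "i \<in> K"
  proof (rule ccontr)
    assume "i \<notin> K"
    then have "(\<Union>j\<in>K. (A(i := A i - {x})) j) = (\<Union>j\<in>K. A j)" by auto
    then show False using K(2) rado_conditionD[OF rado K(1)] by simp
  qed
  have "finite K" using K(1) finite_subset by blast
  then have "card K = card (K - {i}) + 1" using card.remove[OF _ \<open>i \<in> K\<close>] by simp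
  moreover have "(\<Union>j\<in>K. (A(i := A i - {x})) j) = (\<Union>j\<in>K - {i}. A j) \<union> (A i - {x})"
    using \<open>i \<in> K\<close> by auto
  ultimately have "dim ((\<Union>j\<in>K - {i}. A j) \<union> (A i - {x})) \<le> card (K - {i})"
    using K(2) by simp
  moreover have "K - {i} \<subseteq> {0..<n} - {i}" using K(1) by blast
  ultimately show thesis by (rule that[rotated])
qed

text \<open>Submodularity of dim: two violations, one for deleting x and one for deleting y \<noteq> x,
would combine into a violation of the Rado condition for A itself.\<close>

lemma rado_condition_delete:
  assumes rado: "rado_condition scale n A" and fin: "\<And>j. j < n \<Longrightarrow> finite (A j)" and i: "i < n"
    and "x \<noteq> y"
  shows "rado_condition scale n (A(i := A i - {x})) \<or> rado_condition scale n (A(i := A i - {y}))"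
proof (rule ccontr)
  assume "\<not> ?thesis"
  then obtain L1 L2 where
      L1: "L1 \<subseteq> {0..<n} - {i}" "dim ((\<Union>j\<in>L1. A j) \<union> (A i - {x})) \<le> card L1"
    and L2: "L2 \<subseteq> {0..<n} - {i}" "dim ((\<Union>j\<in>L2. A j) \<union> (A i - {y})) \<le> card L2"
    using rado_condition_delete_violation[OF rado fin i] by metis
  define X where "X = (\<Union>j\<in>L1. A j) \<union> (A i - {x})"
  define Y where "Y = (\<Union>j\<in>L2. A j) \<union> (A i - {y})"
  have finL: "finite L1" "finite L2" using L1 L2 finite_subset by blast+
  have finXY: "finite X" "finite Y" unfolding X_def Y_def using L1 L2 finL fin i by auto
  have "insert i (L1 \<union> L2) \<subseteq> {0..<n}" using L1 L2 i by auto
  then have "card (insert i (L1 \<union> L2)) \<le> dim (\<Union>j\<in>insert i (L1 \<union> L2). A j)"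
    by (rule rado_conditionD[OF rado])
  moreover have "(\<Union>j\<in>insert i (L1 \<union> L2). A j) = X \<union> Y"
    unfolding X_def Y_def using \<open>x \<noteq> y\<close> by auto
  moreover have "i \<notin> L1 \<union> L2" using L1 L2 by blast
  ultimately have union: "card (L1 \<union> L2) + 1 \<le> dim (X \<union> Y)"
    using finL by simp
  have "card (L1 \<inter> L2) \<le> dim (\<Union>j\<in>L1 \<inter> L2. A j)"
    using L1 by (intro rado_conditionD[OF rado]) auto
  also have "\<dots> \<le> dim (X \<inter> Y)"
    by (rule dim_subset_finite) (use finXY in \<open>auto simp: X_def Y_def\<close>)
  finally have inter: "card (L1 \<inter> L2) \<le> dim (X \<inter> Y)" .
  have "card (L1 \<union> L2) + 1 + card (L1 \<inter> L2) \<le> dim (X \<union> Y) + dim (X \<inter> Y)"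
    using union inter by (rule add_mono)
  also have "\<dots> \<le> dim X + dim Y"
    using finXY by (rule dim_Un_Int_le)
  also have "\<dots> \<le> card L1 + card L2"
    using L1(2) L2(2) by (intro add_mono) (simp_all only: X_def Y_def)
  also have "\<dots> = card (L1 \<union> L2) + card (L1 \<inter> L2)"
    using finL by (rule card_Un_Int)
  finally show False by simp
qed

lemma rado_condition_singletons:
  assumes rado: "rado_condition scale n A" and fin: "\<And>j. j < n \<Longrightarrow> finite (A j)"
    and small: "\<And>j. j < n \<Longrightarrow> card (A j) \<le> 1"
  obtains c where "\<forall>j<n. A j = {c j}"
proof -
  have "card (A j) = Suc 0" if "j < n" for j
    using rado_condition_nonempty[OF rado that] fin[OF that] small[OF that]
    by (simp add: antisym Suc_leI card_gt_0_iff)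
  then have "\<forall>j. \<exists>c. j < n \<longrightarrow> A j = {c}"
    by (simp add: card_1_singleton_iff)
  from choice[OF this] obtain c where "\<forall>j. j < n \<longrightarrow> A j = {c j}" ..
  then show thesis using that by blast
qed

theorem rado_transversal:
  assumes "rado_condition scale n A" "\<And>j. j < n \<Longrightarrow> finite (A j)"
  shows "\<exists>c. (\<forall>j<n. c j \<in> A j) \<and> rado_condition scale n (\<lambda>j. {c j})"
  using assms
proof (induction "\<Sum>j<n. card (A j)" arbitrary: A rule: less_induct)
  case less
  show ?case
  proof (cases "\<exists>i<n. 2 \<le> card (A i)")
    case True
    then obtain i where i: "i < n" "2 \<le> card (A i)" by blast
    then obtain x y where xy: "x \<in> A i" "y \<in> A i" "x \<noteq> y"
      using card_le_Suc0_iff_eq[OF less.prems(2)[OF i(1)]] by force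
    have shrink: "\<exists>c. (\<forall>j<n. c j \<in> A j) \<and> rado_condition scale n (\<lambda>j. {c j})"
      if rado_z: "rado_condition scale n (A(i := A i - {z}))" and "z \<in> A i" for z
    proof -
      let ?A = "A(i := A i - {z})"
      have "(\<Sum>j<n. card (?A j)) < (\<Sum>j<n. card (A j))"
      proof (rule sum_strict_mono_ex1)
        show "\<forall>j\<in>{..<n}. card (?A j) \<le> card (A j)"
          using less.prems by (auto intro: card_mono)
        show "\<exists>j\<in>{..<n}. card (?A j) < card (A j)"
          using i \<open>z \<in> A i\<close> less.prems(2)[of i] by (intro bexI[of _ i]) (auto intro: card_Diff1_less)
      qed simp
      moreover have "finite (?A j)" if "j < n" for j
        using less.prems(2)[OF that] by auto
      ultimately obtain c where "\<forall>j<n. c j \<in> ?A j" "rado_condition scale n (\<lambda>j. {c j})"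
        using less.hyps[OF _ rado_z] by blast
      then show ?thesis by (intro exI[of _ c]) (auto split: if_splits)
    qed
    from rado_condition_delete[OF less.prems i(1) xy(3)] shrink xy show ?thesis by blast
  next
    case False
    then have "card (A j) \<le> 1" if "j < n" for j
      using that by (auto simp: not_le)
    then obtain c where "\<forall>j<n. A j = {c j}"
      using rado_condition_singletons[OF less.prems] by blast
    moreover have "rado_condition scale n (\<lambda>j. {c j})"
      unfolding rado_condition_def
    proof (intro allI impI)
      fix K assume K: "K \<subseteq> {0..<n}"
      with \<open>\<forall>j<n. A j = {c j}\<close> have "(\<Union>j\<in>K. {c j}) = (\<Union>j\<in>K. A j)"
        by (intro SUP_cong) auto
      then show "card K \<le> dim (\<Union>j\<in>K. {c j})" using rado_conditionD[OF less.prems(1) K] by simp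
    qed
    ultimately show ?thesis by (intro exI[of _ c] conjI) simp_all
  qed
qed

end

lemma widget_legal_if_not_full:
  assumes "vector_space scale" "\<not> widget_full scale K p"
  shows "widget_legal scale K p"
  unfolding widget_legal_def
proof (intro allI impI)
  interpret V: vector_space scale by fact
  fix S assume "widget_section K p S"
  then have "S \<subseteq> (\<Union>i\<in>K. {fst (p i), snd (p i)})"
    unfolding widget_section_def by blast
  moreover have "finite K"
    using assms(2) card.infinite unfolding widget_full_def by fastforce
  ultimately have "V.dim S \<le> V.dim (\<Union>i\<in>K. {fst (p i), snd (p i)})"
    by (intro V.dim_subset_finite) auto
  then show "V.dim S \<le> card K - 1"
    using assms(2) unfolding widget_full_def by linarith
qed

lemma widget_legal_imp_not_rado_condition:
  assumes "vector_space scale" "n \<ge> 1" "widget_legal scale {0..<n} p"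
  shows "\<not> rado_condition scale n (\<lambda>i. {fst (p i), snd (p i)})"
proof
  interpret V: vector_space scale by fact
  assume "rado_condition scale n (\<lambda>i. {fst (p i), snd (p i)})"
  then obtain c where c: "\<forall>j<n. c j \<in> {fst (p j), snd (p j)}" "rado_condition scale n (\<lambda>j. {c j})"
    using V.rado_transversal by blast
  have "widget_section {0..<n} p (c ` {0..<n})"
    unfolding widget_section_def using c(1) by (intro exI[of _ "{0..<n}"] exI[of _ c]) auto
  then have "V.dim (c ` {0..<n}) \<le> n - 1"
    using assms(3) unfolding widget_legal_def by auto
  moreover have "(\<Union>j\<in>{0..<n}. {c j}) = c ` {0..<n}" by blast
  then have "n \<le> V.dim (c ` {0..<n})"
    using V.rado_conditionD[OF c(2), of "{0..<n}"] by simp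
  ultimately show False using assms(2) by linarith
qed

theorem corollary1p2:
  fixes scale :: "'f::field \<Rightarrow> 'v::ab_group_add \<Rightarrow> 'v"
    and p :: "nat \<Rightarrow> 'v \<times> 'v"
    and n :: nat
  assumes "vector_space scale"
    and "infinite (UNIV :: 'f set)"
    and "n \<ge> 1"
    and "widget_valid scale {0..<n} p"
  shows "\<exists>K. K \<subseteq> {0..<n} \<and> 1 \<le> card K \<and> card K < n
             \<and> widget_legal scale K p \<and> \<not> widget_full scale K p"
proof (rule ccontr)
  assume no_subwidget: "\<not> ?thesis"
  have "widget_full scale K p" if K: "K \<subseteq> {0..<n}" for K
  proof -
    have "card K \<le> n" using card_mono[OF _ K] by simp
    then consider "card K = 0" | "1 \<le> card K" "card K < n" | "K = {0..<n}"
      using K card_subset_eq[OF _ K] by fastforce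
    then show ?thesis
    proof cases
      case 1
      then show ?thesis unfolding widget_full_def by simp
    next
      case 2
      then show ?thesis using no_subwidget K widget_legal_if_not_full[OF assms(1)] by blast
    next
      case 3
      then show ?thesis using assms(4) unfolding widget_valid_def by simp
    qed
  qed
  then have "rado_condition scale n (\<lambda>i. {fst (p i), snd (p i)})"
    unfolding rado_condition_def widget_full_def by blast
  with widget_legal_imp_not_rado_condition[OF assms(1,3)] assms(4) show False
    unfolding widget_valid_def by blast
qed

end
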